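(* Let $k\ge 3$, let $\alpha$ be a primitive element of $\mathbb{F}_{2^k}$, and let $0\le j\le 2^k-2$. Define $S_j=\{\{(\alpha^j,\alpha^j x): x\in B_i\} : 1\le i\le 6\}$ and $\mathbb{S}_j=\{\langle A\rangle : A\in S_j\}$. Then $\mathbb{S}_j$ consists of six $k$-dimensional subspaces of $\mathbb{F}_2^{2k}$, each contained in $V_{\mathbf 0}^{(2k,k)}\cup V_{\alpha^j}^{(2k,k)}$, and every $2$-dimensional subspace $X\subseteq V_{\mathbf 0}^{(2k,k)}\cup V_{\alpha^j}^{(2k,k)}$ that is not contained in $V_{\mathbf 0}^{(2k,k)}$ is contained in at least one element of $\mathbb{S}_j$.
   Context: $\mathbb{F}_2^k$ is identified with $\mathbb{F}_{2^k}$ via a fixed $\mathbb{F}_2$-linear isomorphism (elements are written as binary $k$-tuples or as field elements interchangeably); $(a,b)\in\mathbb{F}_2^{2k}$ denotes concatenation of $a,b\in\mathbb{F}_2^k$, and $\langle A\rangle$ is the $\mathbb{F}_2$-span of $A$. For $x\in\mathbb{F}_2^\ell$, $V_x^{(n,\ell)}$ denotes the set of vectors of $\mathbb{F}_2^n$ whose first $\ell$ coordinates equal $x$. The sets $B_1,\dots,B_6\subseteq\mathbb{F}_2^k$ ($k\ge3$) are: $B_1$ = vectors with first coordinate $0$; $B_2$ = first coordinate $1$; $B_3$ = first two coordinates $00$ or $10$; $B_4$ = first two coordinates $01$ or $11$; $B_5$ = first two coordinates $00$ or $11$; $B_6$ = first two coordinates $01$ or $10$. *)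

theory Defs
  imports Main HOL.Vector_Spaces "HOL-Library.Z2" "HOL-Library.Function_Algebras"
begin

text \<open>The vector space F_2^n: functions nat => bit vanishing from index n on
  (coordinates are indexed 0..n-1, index 0 is the "first" coordinate).\<close>
definition F2vec :: "nat \<Rightarrow> (nat \<Rightarrow> bit) set" where
  "F2vec n = {v. \<forall>i\<ge>n. v i = 0}"

definition f2scale :: "bit \<Rightarrow> (nat \<Rightarrow> bit) \<Rightarrow> (nat \<Rightarrow> bit)" where
  "f2scale c v = (\<lambda>i. c * v i)"

abbreviation f2span :: "(nat \<Rightarrow> bit) set \<Rightarrow> (nat \<Rightarrow> bit) set" where
  "f2span A \<equiv> module.span f2scale A"

abbreviation f2subspace :: "(nat \<Rightarrow> bit) set \<Rightarrow> bool" where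
  "f2subspace A \<equiv> module.subspace f2scale A"

abbreviation f2dim :: "(nat \<Rightarrow> bit) set \<Rightarrow> nat" where
  "f2dim A \<equiv> vector_space.dim f2scale A"

definition concat :: "nat \<Rightarrow> (nat \<Rightarrow> bit) \<Rightarrow> (nat \<Rightarrow> bit) \<Rightarrow> (nat \<Rightarrow> bit)" where
  "concat k a b = (\<lambda>i. if i < k then a i else b (i - k))"

definition Vset :: "nat \<Rightarrow> nat \<Rightarrow> (nat \<Rightarrow> bit) \<Rightarrow> (nat \<Rightarrow> bit) set" where
  "Vset n l x = {v \<in> F2vec n. \<forall>i<l. v i = x i}"

definition Bset :: "nat \<Rightarrow> nat \<Rightarrow> (nat \<Rightarrow> bit) set" where
  "Bset k i =
     (if i = 1 then {v \<in> F2vec k. v 0 = 0}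
      else if i = 2 then {v \<in> F2vec k. v 0 = 1}
      else if i = 3 then {v \<in> F2vec k. (v 0, v 1) = (0,0) \<or> (v 0, v 1) = (1,0)}
      else if i = 4 then {v \<in> F2vec k. (v 0, v 1) = (0,1) \<or> (v 0, v 1) = (1,1)}
      else if i = 5 then {v \<in> F2vec k. (v 0, v 1) = (0,0) \<or> (v 0, v 1) = (1,1)}
      else if i = 6 then {v \<in> F2vec k. (v 0, v 1) = (0,1) \<or> (v 0, v 1) = (1,0)}
      else {})"

definition primitive_elem :: "'a::field \<Rightarrow> bool" where
  "primitive_elem \<alpha> \<longleftrightarrow> {\<alpha> ^ n | n. True} = UNIV - {0}"

text \<open>The set S_j, given the fixed identification phi : F_2^k -> F_(2^k).
  A field element y is written as the k-tuple inv_into (F2vec k) phi y.\<close>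
definition Sj :: "nat \<Rightarrow> ((nat \<Rightarrow> bit) \<Rightarrow> 'a::field) \<Rightarrow> 'a \<Rightarrow> nat \<Rightarrow> (nat \<Rightarrow> bit) set set" where
  "Sj k \<phi> \<alpha> j =
     {{concat k (inv_into (F2vec k) \<phi> (\<alpha> ^ j)) (inv_into (F2vec k) \<phi> (\<alpha> ^ j * \<phi> x)) | x. x \<in> Bset k i}
      | i. 1 \<le> i \<and> i \<le> 6}"

definition SSj :: "nat \<Rightarrow> ((nat \<Rightarrow> bit) \<Rightarrow> 'a::field) \<Rightarrow> 'a \<Rightarrow> nat \<Rightarrow> (nat \<Rightarrow> bit) set set" where
  "SSj k \<phi> \<alpha> j = f2span ` Sj k \<phi> \<alpha> j"

end

theory Submission
  imports Defs
begin

(* Write a = alpha^j (as a k-tuple) and M x = alpha^j * x (transported to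
   k-tuples); a is nonzero and M is an additive bijection of F_2^k.  Each B_i is an affine
   line {v. f_i v = e_i} of the affine plane F_2^2 read off the first two coordinates,
   where f_i is one of the linear forms v0, v1, v0+v1.  The span of
   {(a, M x) : x in B_i} is the subspace
       W_i = {(c a, M z) : c in F_2, f_i z = c e_i},
   which has 2^k elements, hence dimension k, and lies in V_0 union V_a.  The six W_i are
   pairwise distinct.  For the covering property, a 2-dimensional X inside V_0 union V_a
   but not inside V_0 has a basis u, v in which two of u, v, u+v lie in V_a, i.e. have the
   form (a, M z), (a, M w); since any two points of F_2^2 lie on a common affine line, some
   W_i contains both, hence X. *)

interpretation f2: vector_space f2scale
  by unfold_locales (auto simp: f2scale_def fun_eq_iff algebra_simps)

declare mult_bit_eq_and[simp del] add_bit_eq_xor[simp del]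

lemma fun_bit_add_self [simp]: "(v::nat\<Rightarrow>bit) + v = 0"
  by (simp add: fun_eq_iff)

lemma fun_bit_minus: "(v::nat\<Rightarrow>bit) - w = v + w"
  by (simp add: fun_eq_iff)

lemma f2scale_0 [simp]: "f2scale 0 v = 0" and f2scale_1 [simp]: "f2scale 1 v = v"
  by (auto simp: f2scale_def fun_eq_iff)

lemma span_insert_f2:
  "f2span (insert b B) = f2span B \<union> (\<lambda>x. b + x) ` f2span B"
proof -
  have "x - f2scale c b \<in> f2span B \<longleftrightarrow> (if c = 0 then x else b + x) \<in> f2span B" for x c
    by (cases c) (simp_all add: fun_bit_minus add.commute)
  moreover have "b + x \<in> f2span B \<longleftrightarrow> x \<in> (\<lambda>x. b + x) ` f2span B" for x
    by (auto simp: add.assoc[symmetric] intro: image_eqI[of _ _ "b + x"])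
  ultimately show ?thesis
    unfolding f2.span_insert by (auto split: if_splits intro: exI[of _ 0] exI[of _ 1])
qed

lemma card_span_independent:
  assumes "finite B" "f2.independent B"
  shows "finite (f2span B) \<and> card (f2span B) = 2 ^ card B"
  using assms
proof (induction B rule: finite_induct)
  case empty
  then show ?case by (simp add: f2.span_empty)
next
  case (insert b B)
  have ind: "f2.independent B" and nb: "b \<notin> f2span B"
    using insert.prems insert.hyps by (auto simp: f2.independent_insert)
  then have fin: "finite (f2span B)" and card: "card (f2span B) = 2 ^ card B"
    using insert.IH by auto
  have disj: "f2span B \<inter> (\<lambda>x. b + x) ` f2span B = {}"
  proof (rule ccontr)
    assume "f2span B \<inter> (\<lambda>x. b + x) ` f2span B \<noteq> {}"
    then obtain y where y: "y \<in> f2span B" "b + y \<in> f2span B" by blast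
    have "(b + y) + y \<in> f2span B" using f2.span_add[OF y(2) y(1)] .
    then show False using nb by (simp add: add.assoc)
  qed
  have "card (f2span (insert b B)) = card (f2span B) + card ((\<lambda>x. b + x) ` f2span B)"
    unfolding span_insert_f2 using disj fin by (intro card_Un_disjoint) auto
  also have "card ((\<lambda>x. b + x) ` f2span B) = card (f2span B)"
    by (rule card_image) (auto simp: inj_on_def)
  finally show ?case using insert.hyps fin card by (simp add: span_insert_f2)
qed

lemma card_subspace:
  assumes "f2subspace V" "finite V"
  shows "card V = 2 ^ f2dim V"
proof -
  obtain B where B: "B \<subseteq> V" "f2.independent B" "V \<subseteq> f2span B" "card B = f2dim V"
    by (rule f2.basis_exists)
  have "f2span B \<subseteq> V" using B(1) assms(1) by (rule f2.span_minimal)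
  then have "f2span B = V" using B(3) by blast
  moreover have "finite B" using B(1) assms(2) finite_subset by blast
  ultimately show ?thesis using card_span_independent[of B] B by simp
qed

lemma bij_subsets_F2vec:
  "bij_betw (\<lambda>S i. if i \<in> S then 1 else 0 :: bit) (Pow {..<k}) (F2vec k)"
proof (rule bij_betw_imageI)
  show "inj_on (\<lambda>S i. if i \<in> S then 1 else 0 :: bit) (Pow {..<k})"
    by (rule inj_onI) (metis (full_types) zero_neq_one subsetI subset_antisym)
  show "(\<lambda>S i. if i \<in> S then 1 else 0 :: bit) ` Pow {..<k} = F2vec k"
  proof
    show "(\<lambda>S i. if i \<in> S then 1 else 0 :: bit) ` Pow {..<k} \<subseteq> F2vec k"
      by (auto simp: F2vec_def)
    show "F2vec k \<subseteq> (\<lambda>S i. if i \<in> S then 1 else 0 :: bit) ` Pow {..<k}"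
    proof
      fix v assume v: "v \<in> F2vec k"
      then have "v = (\<lambda>i. if i \<in> {i. i < k \<and> v i = 1} then 1 else 0)"
        by (auto simp: F2vec_def fun_eq_iff not_less)
      then show "v \<in> (\<lambda>S i. if i \<in> S then 1 else 0 :: bit) ` Pow {..<k}" by blast
    qed
  qed
qed

lemma finite_F2vec: "finite (F2vec k)"
  using bij_betw_finite[OF bij_subsets_F2vec] by simp

lemma card_F2vec: "card (F2vec k) = 2 ^ k"
  using bij_betw_same_card[OF bij_subsets_F2vec] by (simp add: card_Pow)

lemma F2vec_add: "x \<in> F2vec n \<Longrightarrow> y \<in> F2vec n \<Longrightarrow> x + y \<in> F2vec n"
  by (simp add: F2vec_def)

lemma F2vec_0 [simp]: "0 \<in> F2vec n"
  by (simp add: F2vec_def)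

lemma concat_add: "concat k a b + concat k a' b' = concat k (a + a') (b + b')"
  by (simp add: concat_def fun_eq_iff)

lemma concat_0 [simp]: "concat k 0 0 = 0"
  by (simp add: concat_def fun_eq_iff)

lemma concat_F2vec: "a \<in> F2vec k \<Longrightarrow> b \<in> F2vec k \<Longrightarrow> concat k a b \<in> F2vec (2*k)"
  by (auto simp: concat_def F2vec_def)

lemma concat_inj:
  assumes "concat k a b = concat k a' b'" "a \<in> F2vec k" "a' \<in> F2vec k"
  shows "a = a' \<and> b = b'"
proof
  show "a = a'"
  proof
    fix i show "a i = a' i"
      using fun_cong[OF assms(1), of i] assms(2,3) by (cases "i < k") (auto simp: concat_def F2vec_def)
  qed
  show "b = b'"
  proof
    fix i show "b i = b' i" using fun_cong[OF assms(1), of "i + k"] by (simp add: concat_def)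
  qed
qed

lemma concat_in_Vset: "x \<in> F2vec k \<Longrightarrow> b \<in> F2vec k \<Longrightarrow> concat k x b \<in> Vset (2*k) k x"
  using concat_F2vec[of x k b] by (auto simp: Vset_def concat_def)

lemma Vset_concat:
  assumes "p \<in> Vset (2*k) k x"
  obtains b where "b \<in> F2vec k" "p = concat k x b"
proof
  show "(\<lambda>n. p (n + k)) \<in> F2vec k" using assms by (auto simp: Vset_def F2vec_def)
  show "p = concat k x (\<lambda>n. p (n + k))" using assms by (auto simp: fun_eq_iff concat_def Vset_def)
qed

lemma V0_subspace: "f2subspace (Vset (2*k) k 0)"
  unfolding f2.subspace_def
proof (intro conjI ballI allI)
  fix c x assume "x \<in> Vset (2*k) k 0"
  then show "f2scale c x \<in> Vset (2*k) k 0" by (cases c) (auto simp: Vset_def)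
qed (auto simp: Vset_def F2vec_add)

lemma Vset_add_V0: "x \<in> Vset (2*k) k a \<Longrightarrow> y \<in> Vset (2*k) k 0 \<Longrightarrow> x + y \<in> Vset (2*k) k a"
  by (auto simp: Vset_def F2vec_add)

section \<open>The six affine lines of F_2^2\<close>

definition line_form :: "nat \<Rightarrow> (nat \<Rightarrow> bit) \<Rightarrow> bit" where
  "line_form i v = (if i \<le> 2 then v 0 else if i \<le> 4 then v 1 else v 0 + v 1)"

definition line_const :: "nat \<Rightarrow> bit" where
  "line_const i = (if odd i then 0 else 1)"

lemma line_form_add: "line_form i (x + y) = line_form i x + line_form i y"
  by (simp add: line_form_def ac_simps)

lemma line_form_0 [simp]: "line_form i 0 = 0"
  by (simp add: line_form_def)

lemma indices_1_6: "{1..6::nat} = {1, 2, 3, 4, 5, 6}"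
  by auto

lemma Bset_eq: "i \<in> {1..6} \<Longrightarrow> Bset k i = {v \<in> F2vec k. line_form i v = line_const i}"
  unfolding indices_1_6 by (auto simp: Bset_def line_form_def line_const_def)

lemma unit_vectors_F2vec:
  assumes "k \<ge> 2"
  shows "(\<lambda>n. if n = 0 then 1 else 0 :: bit) \<in> F2vec k" "(\<lambda>n. if n = 1 then 1 else 0 :: bit) \<in> F2vec k"
  using assms by (auto simp: F2vec_def)

lemma line_form_onto:
  assumes "k \<ge> 2"
  shows "\<exists>w \<in> F2vec k. line_form i w = c"
proof (cases c)
  case zero then show ?thesis by (intro bexI[of _ 0]) auto
next
  case one
  show ?thesis
  proof (cases "i \<le> 2 \<or> i > 4")
    case True then show ?thesis
      using unit_vectors_F2vec(1)[OF assms] one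
      by (intro bexI[of _ "\<lambda>n. if n = 0 then 1 else 0"]) (auto simp: line_form_def)
  next
    case False then show ?thesis
      using unit_vectors_F2vec(2)[OF assms] one
      by (intro bexI[of _ "\<lambda>n. if n = 1 then 1 else 0"]) (auto simp: line_form_def)
  qed
qed

lemma card_level_set:
  assumes "k \<ge> 2"
  shows "2 * card {z \<in> F2vec k. line_form i z = c} = 2 ^ k"
proof -
  let ?K = "\<lambda>c. {z \<in> F2vec k. line_form i z = c}"
  obtain e where e: "e \<in> F2vec k" "line_form i e = 1" using line_form_onto[OF assms] by blast
  have "?K 1 = (\<lambda>z. z + e) ` ?K 0"
  proof (rule set_eqI, rule iffI)
    fix x assume x: "x \<in> ?K 1"
    then have "x + e \<in> ?K 0" using e by (simp add: F2vec_add line_form_add)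
    moreover have "x = (x + e) + e" by (simp add: add.assoc)
    ultimately show "x \<in> (\<lambda>z. z + e) ` ?K 0" by blast
  qed (use e in \<open>auto simp: F2vec_add line_form_add\<close>)
  then have half: "card (?K 1) = card (?K 0)"
    by (simp add: card_image inj_on_def)
  have "F2vec k = ?K 0 \<union> ?K 1" by (auto intro: bit.exhaust)
  moreover have "card (?K 0 \<union> ?K 1) = card (?K 0) + card (?K 1)"
    by (rule card_Un_disjoint) (auto simp: finite_F2vec)
  ultimately have "card (?K 0) + card (?K 1) = 2 ^ k"
    using card_F2vec[of k] by simp
  then show ?thesis using half by (cases c) simp_all
qed

lemma two_points_on_line:
  "\<exists>i \<in> {1..6}. line_form i z = line_const i \<and> line_form i w = line_const i"
  unfolding indices_1_6
  by (cases "z 0"; cases "z 1"; cases "w 0"; cases "w 1") (simp_all add: line_form_def line_const_def)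

section \<open>The subspaces W_i for a nonzero a and an additive bijection M\<close>

definition line_gens :: "nat \<Rightarrow> (nat\<Rightarrow>bit) \<Rightarrow> ((nat\<Rightarrow>bit) \<Rightarrow> (nat\<Rightarrow>bit)) \<Rightarrow> nat \<Rightarrow> (nat\<Rightarrow>bit) set" where
  "line_gens k a M i = {concat k a (M x) | x. x \<in> Bset k i}"

definition line_space :: "nat \<Rightarrow> (nat\<Rightarrow>bit) \<Rightarrow> ((nat\<Rightarrow>bit) \<Rightarrow> (nat\<Rightarrow>bit)) \<Rightarrow> nat \<Rightarrow> (nat\<Rightarrow>bit) set" where
  "line_space k a M i =
     {concat k (f2scale c a) (M z) | c z. z \<in> F2vec k \<and> line_form i z = c * line_const i}"

text \<open>The construction only uses that a is a nonzero vector of F_2^k and M an additive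
  bijection of F_2^k; k \<ge> 2 makes the first two coordinates available.\<close>
locale line_family =
  fixes k :: nat and a :: "nat\<Rightarrow>bit" and M :: "(nat\<Rightarrow>bit) \<Rightarrow> (nat\<Rightarrow>bit)"
  assumes k2: "k \<ge> 2" and a_F2vec: "a \<in> F2vec k" and a_nonzero: "a \<noteq> 0"
    and M_add: "\<And>x y. x \<in> F2vec k \<Longrightarrow> y \<in> F2vec k \<Longrightarrow> M (x + y) = M x + M y"
    and M_bij: "bij_betw M (F2vec k) (F2vec k)"
begin

abbreviation W :: "nat \<Rightarrow> (nat\<Rightarrow>bit) set" where
  "W \<equiv> line_space k a M"

lemma M_0 [simp]: "M 0 = 0"
  using M_add[of 0 0] by simp

lemma M_F2vec: "x \<in> F2vec k \<Longrightarrow> M x \<in> F2vec k"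
  using M_bij by (auto simp: bij_betw_def)

lemma scale_a_F2vec: "f2scale c a \<in> F2vec k"
  using a_F2vec by (cases c) auto

lemma concat_param_inj:
  assumes "concat k (f2scale c a) (M z) = concat k (f2scale d a) (M w)" "z \<in> F2vec k" "w \<in> F2vec k"
  shows "c = d \<and> z = w"
proof -
  from concat_inj[OF assms(1) scale_a_F2vec scale_a_F2vec]
  have "f2scale c a = f2scale d a" "M z = M w" by auto
  then show ?thesis
    using a_nonzero assms(2,3) M_bij by (cases c; cases d) (auto simp: bij_betw_def inj_on_def)
qed

text \<open>W_i is closed under addition because line_form i is additive.\<close>
lemma line_space_subspace: "f2subspace (W i)"
  unfolding f2.subspace_def
proof (intro conjI ballI allI)
  show "0 \<in> W i"
    unfolding line_space_def by (intro CollectI exI[of _ 0]) simp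
  then show "f2scale c x \<in> W i" if "x \<in> W i" for c x
    using that by (cases c) auto
  fix x y assume "x \<in> W i" "y \<in> W i"
  then obtain c z d w where
    x: "x = concat k (f2scale c a) (M z)" "z \<in> F2vec k" "line_form i z = c * line_const i" and
    y: "y = concat k (f2scale d a) (M w)" "w \<in> F2vec k" "line_form i w = d * line_const i"
    unfolding line_space_def by blast
  have "x + y = concat k (f2scale (c + d) a) (M (z + w))"
    using x y by (cases c; cases d) (simp_all add: concat_add M_add)
  moreover have "line_form i (z + w) = (c + d) * line_const i"
    using x y by (simp add: line_form_add distrib_right)
  ultimately show "x + y \<in> W i"
    using x(2) y(2) F2vec_add unfolding line_space_def by blast
qed

lemma mem_line_space:
  assumes "z \<in> F2vec k"
  shows "concat k a (M z) \<in> W i \<longleftrightarrow> line_form i z = line_const i"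
proof
  assume "concat k a (M z) \<in> W i"
  then obtain c w where w: "concat k (f2scale 1 a) (M z) = concat k (f2scale c a) (M w)"
      "w \<in> F2vec k" "line_form i w = c * line_const i"
    unfolding line_space_def by auto
  then show "line_form i z = line_const i"
    using concat_param_inj[OF w(1) assms] by simp
next
  assume "line_form i z = line_const i"
  then have "concat k a (M z) = concat k (f2scale 1 a) (M z) \<and> z \<in> F2vec k
      \<and> line_form i z = 1 * line_const i"
    using assms by simp
  then show "concat k a (M z) \<in> W i"
    unfolding line_space_def by blast
qed

lemma line_gens_eq:
  "i \<in> {1..6} \<Longrightarrow> line_gens k a M i = {concat k a (M z) | z. z \<in> F2vec k \<and> line_form i z = line_const i}"
  unfolding line_gens_def by (simp add: Bset_eq)

lemma line_gens_subset: "i \<in> {1..6} \<Longrightarrow> line_gens k a M i \<subseteq> W i"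
  by (auto simp: line_gens_eq mem_line_space)

text \<open>Points (0, M z) of W_i are differences of two generators (a, M (z + w)), (a, M w),
  where w is any point on the i-th line.\<close>
lemma line_space_subset_span: "i \<in> {1..6} \<Longrightarrow> W i \<subseteq> f2span (line_gens k a M i)"
proof
  fix x assume i: "i \<in> {1..6}" and "x \<in> W i"
  then obtain c z where x: "x = concat k (f2scale c a) (M z)" "z \<in> F2vec k"
      "line_form i z = c * line_const i"
    unfolding line_space_def by blast
  have gen: "concat k a (M v) \<in> f2span (line_gens k a M i)"
    if "v \<in> F2vec k" "line_form i v = line_const i" for v
    using that by (intro f2.span_base) (auto simp: line_gens_eq[OF i])
  show "x \<in> f2span (line_gens k a M i)"
  proof (cases c)
    case one then show ?thesis using x gen by simp
  next
    case zero
    obtain w where w: "w \<in> F2vec k" "line_form i w = line_const i"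
      using line_form_onto[OF k2] by blast
    have "concat k a (M (z + w)) + concat k a (M w) \<in> f2span (line_gens k a M i)"
      using x zero w by (intro f2.span_add gen) (simp_all add: F2vec_add line_form_add)
    moreover have "M (z + w) + M w = M z"
      using x(2) w(1) by (simp add: M_add add.assoc)
    ultimately show ?thesis using x zero by (simp add: concat_add)
  qed
qed

lemma span_line_gens: "i \<in> {1..6} \<Longrightarrow> f2span (line_gens k a M i) = W i"
  by (rule antisym[OF f2.span_minimal[OF line_gens_subset line_space_subspace] line_space_subset_span])

text \<open>W_i is the bijective image of {0} \<times> (line_form i)\<inverse>(0) \<union> {1} \<times> (line_form i)\<inverse>(line_const i),
  which has 2^(k-1) + 2^(k-1) elements.\<close>
lemma card_line_space: "finite (W i) \<and> card (W i) = 2 ^ k"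
proof -
  let ?K = "\<lambda>c. {z \<in> F2vec k. line_form i z = c}"
  let ?D = "{0::bit} \<times> ?K 0 \<union> {1} \<times> ?K (line_const i)"
  let ?h = "\<lambda>(c, z). concat k (f2scale c a) (M z)"
  have W_image: "W i = ?h ` ?D"
  proof
    show "W i \<subseteq> ?h ` ?D"
    proof
      fix x assume "x \<in> W i"
      then obtain c z where "x = ?h (c, z)" "z \<in> F2vec k" "line_form i z = c * line_const i"
        unfolding line_space_def by auto
      then show "x \<in> ?h ` ?D" by (cases c) (auto intro!: image_eqI[of _ _ "(c, z)"])
    qed
    show "?h ` ?D \<subseteq> W i" unfolding line_space_def by fastforce
  qed
  have "inj_on ?h ?D"
    by (rule inj_onI) (auto dest: concat_param_inj)
  moreover have "finite ?D" using finite_F2vec[of k] by auto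
  moreover have "card ?D = card (?K 0) + card (?K (line_const i))"
    by (subst card_Un_disjoint) (auto simp: card_cartesian_product finite_F2vec)
  moreover have "\<dots> = 2 ^ k"
    using card_level_set[OF k2, of i 0] card_level_set[OF k2, of i "line_const i"] by simp
  ultimately show ?thesis unfolding W_image by (simp add: card_image)
qed

text \<open>Having 2^k elements, W_i is k-dimensional.\<close>
lemma dim_line_space: "f2dim (W i) = k"
proof -
  have "(2::nat) ^ f2dim (W i) = 2 ^ k"
    using card_subspace[OF line_space_subspace] card_line_space by metis
  then show ?thesis by (simp add: power_inject_exp)
qed

lemma line_space_subset_F2vec: "W i \<subseteq> F2vec (2*k)"
  unfolding line_space_def using concat_F2vec[OF scale_a_F2vec M_F2vec] by blast

lemma line_space_subset_V: "W i \<subseteq> Vset (2*k) k 0 \<union> Vset (2*k) k a"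
proof
  fix x assume "x \<in> W i"
  then obtain c z where x: "x = concat k (f2scale c a) (M z)" "z \<in> F2vec k"
    unfolding line_space_def by blast
  then show "x \<in> Vset (2*k) k 0 \<union> Vset (2*k) k a"
    using concat_in_Vset[OF _ M_F2vec[OF x(2)]] a_F2vec by (cases c) auto
qed

text \<open>Distinct lines give distinct subspaces: test on (a, M 0) and (a, M e) for the unit
  vectors e.\<close>
lemma line_space_inj: "inj_on W {1..6}"
proof (rule inj_onI)
  fix i i' assume i: "i \<in> {1..6}" and i': "i' \<in> {1..6}" and eq: "W i = W i'"
  have same: "line_form i z = line_const i \<longleftrightarrow> line_form i' z = line_const i'" if "z \<in> F2vec k" for z
    using mem_line_space[OF that, of i] mem_line_space[OF that, of i'] eq by simp
  note tests = same[OF F2vec_0] same[OF unit_vectors_F2vec(1)[OF k2]] same[OF unit_vectors_F2vec(2)[OF k2]]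
  from i i' tests show "i = i'"
    unfolding indices_1_6 by (auto simp: line_form_def line_const_def)
qed

lemma Vset_a_param:
  assumes "p \<in> Vset (2*k) k a"
  obtains z where "z \<in> F2vec k" "p = concat k a (M z)"
proof -
  obtain b where b: "b \<in> F2vec k" "p = concat k a b"
    using assms by (rule Vset_concat)
  moreover obtain z where "z \<in> F2vec k" "b = M z"
    using b(1) M_bij by (auto simp: bij_betw_def)
  ultimately show ?thesis using that by blast
qed

lemma two_points_in_line_space:
  assumes "p \<in> Vset (2*k) k a" "q \<in> Vset (2*k) k a"
  shows "\<exists>i \<in> {1..6}. p \<in> W i \<and> q \<in> W i"
proof -
  obtain z w where z: "z \<in> F2vec k" "p = concat k a (M z)"
    and w: "w \<in> F2vec k" "q = concat k a (M w)"
    using assms by (meson Vset_a_param)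
  obtain i where "i \<in> {1..6}" "line_form i z = line_const i" "line_form i w = line_const i"
    using two_points_on_line by blast
  then show ?thesis using z w mem_line_space by blast
qed

text \<open>Two vectors of V_0 \<union> V_a, not both in V_0, lie in a common W_i: among u, v, u + v
  two lie in V_a, and W_i is closed under addition.\<close>
lemma pair_in_line_space:
  assumes "u \<in> Vset (2*k) k 0 \<union> Vset (2*k) k a" "v \<in> Vset (2*k) k 0 \<union> Vset (2*k) k a"
    and "\<not> (u \<in> Vset (2*k) k 0 \<and> v \<in> Vset (2*k) k 0)"
  shows "\<exists>i \<in> {1..6}. u \<in> W i \<and> v \<in> W i"
proof -
  have close: "\<exists>i \<in> {1..6}. p \<in> W i \<and> q \<in> W i"
    if "\<exists>i \<in> {1..6}. p \<in> W i \<and> p + q \<in> W i" for p q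
  proof -
    from that obtain i where i: "i \<in> {1..6}" "p \<in> W i" "p + q \<in> W i" by blast
    then have "p + (p + q) \<in> W i" using line_space_subspace f2.subspace_add by blast
    then show ?thesis using i by (auto simp: add.assoc[symmetric])
  qed
  consider "u \<in> Vset (2*k) k a" "v \<in> Vset (2*k) k a"
    | "u \<in> Vset (2*k) k a" "v \<in> Vset (2*k) k 0"
    | "u \<in> Vset (2*k) k 0" "v \<in> Vset (2*k) k a"
    using assms by blast
  then show ?thesis
  proof cases
    case 1 then show ?thesis by (rule two_points_in_line_space)
  next
    case 2
    then have "u + v \<in> Vset (2*k) k a" by (intro Vset_add_V0)
    then show ?thesis by (rule close[OF two_points_in_line_space[OF 2(1)]])
  next
    case 3
    then have "v + u \<in> Vset (2*k) k a" by (intro Vset_add_V0)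
    then have "\<exists>i \<in> {1..6}. v \<in> W i \<and> u \<in> W i"
      by (rule close[OF two_points_in_line_space[OF 3(2)]])
    then show ?thesis by blast
  qed
qed

lemma plane_in_line_space:
  assumes X: "f2subspace X" "f2dim X = 2" "X \<subseteq> Vset (2*k) k 0 \<union> Vset (2*k) k a"
    "\<not> X \<subseteq> Vset (2*k) k 0"
  shows "\<exists>i \<in> {1..6}. X \<subseteq> W i"
proof -
  obtain B where B: "B \<subseteq> X" "f2.independent B" "X \<subseteq> f2span B" "card B = f2dim X"
    by (rule f2.basis_exists)
  then obtain u v where uv: "B = {u, v}" using X(2) by (metis card_2_iff)
  have "\<not> (u \<in> Vset (2*k) k 0 \<and> v \<in> Vset (2*k) k 0)"
  proof
    assume "u \<in> Vset (2*k) k 0 \<and> v \<in> Vset (2*k) k 0"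
    then have "f2span B \<subseteq> Vset (2*k) k 0"
      using uv V0_subspace by (intro f2.span_minimal) auto
    then show False using B(3) X(4) by blast
  qed
  moreover have "u \<in> Vset (2*k) k 0 \<union> Vset (2*k) k a" "v \<in> Vset (2*k) k 0 \<union> Vset (2*k) k a"
    using B(1) X(3) uv by auto
  ultimately obtain i where i: "i \<in> {1..6}" "u \<in> W i" "v \<in> W i"
    using pair_in_line_space by blast
  have "f2span B \<subseteq> W i" using uv i line_space_subspace by (intro f2.span_minimal) auto
  then show ?thesis using B(3) i by blast
qed

end

section \<open>The field model\<close>

text \<open>0 is never primitive, since 0 = 0^1 is a power of 0.\<close>
lemma primitive_elem_nonzero:
  assumes "primitive_elem \<alpha>"
  shows "\<alpha> \<noteq> 0"
proof
  assume "\<alpha> = 0"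
  then have "(0::'a) \<in> {\<alpha> ^ n | n. True}" by (intro CollectI exI[of _ 1]) simp
  then show False using assms unfolding primitive_elem_def by blast
qed

lemma field_model_line_family:
  fixes \<phi> :: "(nat \<Rightarrow> bit) \<Rightarrow> 'a::field" and c :: 'a
  assumes k: "k \<ge> 2" and bij: "bij_betw \<phi> (F2vec k) UNIV"
    and \<phi>_add: "\<And>v w. v \<in> F2vec k \<Longrightarrow> w \<in> F2vec k \<Longrightarrow> \<phi> (v + w) = \<phi> v + \<phi> w"
    and c: "c \<noteq> 0"
  shows "line_family k (inv_into (F2vec k) \<phi> c) (\<lambda>x. inv_into (F2vec k) \<phi> (c * \<phi> x))"
proof -
  define \<psi> where "\<psi> = inv_into (F2vec k) \<phi>"
  have \<psi>_F2vec: "\<psi> y \<in> F2vec k" and \<phi>_\<psi>: "\<phi> (\<psi> y) = y" for y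
    unfolding \<psi>_def using bij by (metis bij_betw_def inv_into_into UNIV_I, metis bij_betw_def f_inv_into_f UNIV_I)
  have \<phi>_inj: "x = y" if "x \<in> F2vec k" "y \<in> F2vec k" "\<phi> x = \<phi> y" for x y
    using bij that by (auto simp: bij_betw_def inj_on_def)
  have \<psi>_\<phi>: "\<psi> (\<phi> x) = x" if "x \<in> F2vec k" for x
    using \<phi>_inj[OF \<psi>_F2vec that] \<phi>_\<psi> by simp
  have \<psi>_add: "\<psi> (y + y') = \<psi> y + \<psi> y'" for y y'
    by (rule \<phi>_inj) (auto simp: \<psi>_F2vec F2vec_add \<phi>_\<psi> \<phi>_add)
  have \<phi>_0: "\<phi> 0 = 0" using \<phi>_add[of 0 0] by (metis F2vec_0 add_0 add_cancel_right_right)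
  have "bij_betw (\<lambda>x. \<psi> (c * \<phi> x)) (F2vec k) (F2vec k)"
  proof (rule bij_betw_byWitness[where f' = "\<lambda>y. \<psi> (\<phi> y / c)"])
    show "\<forall>x \<in> F2vec k. \<psi> (\<phi> (\<psi> (c * \<phi> x)) / c) = x"
      using c by (simp add: \<phi>_\<psi> \<psi>_\<phi>)
    show "\<forall>y \<in> F2vec k. \<psi> (c * \<phi> (\<psi> (\<phi> y / c))) = y"
      using c by (simp add: \<phi>_\<psi> \<psi>_\<phi>)
  qed (auto simp: \<psi>_F2vec)
  moreover have "\<psi> c \<noteq> 0" using \<phi>_\<psi>[of c] \<phi>_0 c by auto
  ultimately show ?thesis
    unfolding \<psi>_def[symmetric]
    using k \<psi>_F2vec by unfold_locales (simp_all add: \<phi>_add distrib_left \<psi>_add)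
qed

lemma SSj_eq_line_spaces:
  assumes "line_family k (inv_into (F2vec k) \<phi> (\<alpha> ^ j)) (\<lambda>x. inv_into (F2vec k) \<phi> (\<alpha> ^ j * \<phi> x))"
  shows "SSj k \<phi> \<alpha> j =
    line_space k (inv_into (F2vec k) \<phi> (\<alpha> ^ j)) (\<lambda>x. inv_into (F2vec k) \<phi> (\<alpha> ^ j * \<phi> x)) ` {1..6}"
proof -
  have Sj: "Sj k \<phi> \<alpha> j =
    line_gens k (inv_into (F2vec k) \<phi> (\<alpha> ^ j)) (\<lambda>x. inv_into (F2vec k) \<phi> (\<alpha> ^ j * \<phi> x)) ` {1..6}"
    unfolding Sj_def line_gens_def by (auto simp: image_def)
  show ?thesis
    unfolding SSj_def Sj image_image
    by (intro image_cong refl) (simp add: line_family.span_line_gens[OF assms])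
qed

theorem mainTheorem6:
  fixes k j :: nat and \<phi> :: "(nat \<Rightarrow> bit) \<Rightarrow> 'a::{field,finite}" and \<alpha> :: 'a
  assumes "k \<ge> 3"
    and "card (UNIV :: 'a set) = 2 ^ k"
    and "bij_betw \<phi> (F2vec k) UNIV"
    and "\<And>v w. v \<in> F2vec k \<Longrightarrow> w \<in> F2vec k \<Longrightarrow> \<phi> (v + w) = \<phi> v + \<phi> w"
    and "primitive_elem \<alpha>"
    and "j \<le> 2 ^ k - 2"
  shows "card (SSj k \<phi> \<alpha> j) = 6
    \<and> (\<forall>W \<in> SSj k \<phi> \<alpha> j. f2subspace W \<and> W \<subseteq> F2vec (2*k) \<and> f2dim W = k
          \<and> W \<subseteq> Vset (2*k) k 0 \<union> Vset (2*k) k (inv_into (F2vec k) \<phi> (\<alpha> ^ j)))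
    \<and> (\<forall>X. f2subspace X \<and> f2dim X = 2
          \<and> X \<subseteq> Vset (2*k) k 0 \<union> Vset (2*k) k (inv_into (F2vec k) \<phi> (\<alpha> ^ j))
          \<and> \<not> X \<subseteq> Vset (2*k) k 0
          \<longrightarrow> (\<exists>W \<in> SSj k \<phi> \<alpha> j. X \<subseteq> W))"
proof -
  have "\<alpha> ^ j \<noteq> 0" using primitive_elem_nonzero[OF assms(5)] by simp
  then interpret line_family k "inv_into (F2vec k) \<phi> (\<alpha> ^ j)" "\<lambda>x. inv_into (F2vec k) \<phi> (\<alpha> ^ j * \<phi> x)"
    using assms(1,3,4) by (intro field_model_line_family) auto
  have SSj: "SSj k \<phi> \<alpha> j = W ` {1..6}"
    by (rule SSj_eq_line_spaces) unfold_locales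
  have "card (W ` {1..6}) = 6"
    using line_space_inj by (simp add: card_image)
  moreover have "\<forall>V \<in> W ` {1..6}. f2subspace V \<and> V \<subseteq> F2vec (2*k) \<and> f2dim V = k
      \<and> V \<subseteq> Vset (2*k) k 0 \<union> Vset (2*k) k (inv_into (F2vec k) \<phi> (\<alpha> ^ j))"
    by (simp add: line_space_subspace line_space_subset_F2vec dim_line_space line_space_subset_V)
  moreover have "\<forall>X. f2subspace X \<and> f2dim X = 2
      \<and> X \<subseteq> Vset (2*k) k 0 \<union> Vset (2*k) k (inv_into (F2vec k) \<phi> (\<alpha> ^ j))
      \<and> \<not> X \<subseteq> Vset (2*k) k 0 \<longrightarrow> (\<exists>V \<in> W ` {1..6}. X \<subseteq> V)"
  proof (intro allI impI)
    fix X assume "f2subspace X \<and> f2dim X = 2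
      \<and> X \<subseteq> Vset (2*k) k 0 \<union> Vset (2*k) k (inv_into (F2vec k) \<phi> (\<alpha> ^ j))
      \<and> \<not> X \<subseteq> Vset (2*k) k 0"
    then have "\<exists>i \<in> {1..6}. X \<subseteq> W i" by (elim conjE) (rule plane_in_line_space)
    then show "\<exists>V \<in> W ` {1..6}. X \<subseteq> V" by blast
  qed
  ultimately show ?thesis unfolding SSj by (intro conjI)
qed

end
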